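(* Let $\mu$ be a probability measure and $\omega\ge0$ a weight with $\int\omega\,d\mu<\infty$. Assume there is $C>0$ such that $\inf_c\int|g-c|\,\omega\,d\mu\le C\int\sqrt{\Gamma(g)}\,d\mu$ for all $g\in\mathcal A$. Let $G(s)=\inf\{u:\mu(\omega\le u)>s\}$ for $s\in(0,1)$. Then for all $s\in(0,1)$ with $G(s)>0$ and all $g\in\mathcal A$, $$\inf_{c\in\mathbb R}\int|g-c|\,d\mu\le\frac{C}{G(s)}\int\sqrt{\Gamma(g)}\,d\mu+s\,\mathrm{Osc}_\mu(g),$$ where $\mathrm{Osc}_\mu(g)=\operatorname{ess\,sup}g-\operatorname{ess\,inf}g$.
   Context: Standing framework: $E$ Polish, $\mu$ a probability measure on $E$, $L$ a $\mu$-symmetric diffusion operator with an algebra $\mathcal A$ of bounded functions and carré du champ $\Gamma(f)=\Gamma(f,f)=\frac12(L(f^2)-2fLf)\ge0$. (Model case $E=\mathbb R^n$, $\Gamma(f)=|\nabla f|^2$.) *)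

theory Defs
  imports "HOL-Probability.Probability"
begin

definition carre_du_champ :: "(('a \<Rightarrow> real) \<Rightarrow> 'a \<Rightarrow> real) \<Rightarrow> ('a \<Rightarrow> real) \<Rightarrow> 'a \<Rightarrow> real" where
  "carre_du_champ L f x = (L (\<lambda>y. (f y)\<^sup>2) x - 2 * f x * L f x) / 2"

definition diffusion_framework ::
  "('a::polish_space) measure \<Rightarrow> (('a \<Rightarrow> real) \<Rightarrow> 'a \<Rightarrow> real) \<Rightarrow> ('a \<Rightarrow> real) set \<Rightarrow> bool" where
  "diffusion_framework M L A \<longleftrightarrow>
     prob_space M \<and> sets M = sets borel \<and>
     (\<forall>c. (\<lambda>_. c) \<in> A) \<and>
     (\<forall>f\<in>A. \<forall>g\<in>A. (\<lambda>x. f x + g x) \<in> A \<and> (\<lambda>x. f x * g x) \<in> A) \<and>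
     (\<forall>c. \<forall>f\<in>A. (\<lambda>x. c * f x) \<in> A) \<and>
     (\<forall>f\<in>A. f \<in> borel_measurable M \<and> (\<exists>B. \<forall>x\<in>space M. \<bar>f x\<bar> \<le> B)) \<and>
     (\<forall>f\<in>A. integrable M (L f)) \<and>
     (\<forall>f\<in>A. \<forall>g\<in>A. (\<integral>x. f x * L g x \<partial>M) = (\<integral>x. g x * L f x \<partial>M)) \<and>
     (\<forall>f\<in>A. \<forall>x\<in>space M. carre_du_champ L f x \<ge> 0) \<and>
     (\<forall>f\<in>A. \<forall>\<phi> \<phi>' \<phi>''.
        (\<forall>t. (\<phi> has_real_derivative \<phi>' t) (at t)) \<and>
        (\<forall>t. (\<phi>' has_real_derivative \<phi>'' t) (at t)) \<and>
        continuous_on UNIV \<phi>'' \<and> (\<phi> \<circ> f) \<in> A \<longrightarrow>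
        (AE x in M. L (\<phi> \<circ> f) x = \<phi>' (f x) * L f x + \<phi>'' (f x) * carre_du_champ L f x))"

text \<open>Oscillation: ess sup g - ess inf g, with ess inf g = - ess sup (-g).\<close>
definition osc :: "'a measure \<Rightarrow> ('a \<Rightarrow> real) \<Rightarrow> ereal" where
  "osc M g = esssup M (\<lambda>x. ereal (g x)) + esssup M (\<lambda>x. ereal (- g x))"

definition quantile_G :: "'a measure \<Rightarrow> ('a \<Rightarrow> real) \<Rightarrow> real \<Rightarrow> real" where
  "quantile_G M w s = Inf {u. measure M {x \<in> space M. w x \<le> u} > s}"

end

theory Submission
  imports Defs
begin

(* Write G = G(s) and fix a real constant c.  On the set {w >= G} we have
   |g - c| <= |g - c| w / G, while on the set {w < G}, whose measure is at
   most s by the definition of the quantile G, the value |g - c| is bounded by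
   Osc(g) as soon as c lies between ess inf g and ess sup g.  Integrating gives
     int |g - c| <= (1/G) int |g - c| w + s Osc(g).
   Clamping an arbitrary c into [ess inf g, ess sup g] only decreases the
   weighted integral, so taking the infimum over c on both sides and invoking
   the weighted hypothesis yields the theorem. *)

text \<open>Infima commute with monotone affine maps on the extended nonnegative reals
  (the map is continuous), so the infimum over the centring constant can be moved
  through the final estimate.\<close>
lemma INF_ennreal_affine:
  fixes f :: "'b \<Rightarrow> ennreal"
  shows "(INF c. ennreal a * f c + b) = ennreal a * (INF c. f c) + b"
proof -
  have cont: "continuous_on UNIV (\<lambda>y::ennreal. ennreal a * y + b)"
    by (intro continuous_on_add continuous_on_const ennreal_continuous_on_cmult) auto
  have "(\<lambda>y::ennreal. ennreal a * y + b) (Inf (range f)) = (INF y\<in>range f. ennreal a * y + b)"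
  proof (rule continuous_at_Inf_mono)
    show "continuous (at_right (Inf (range f))) (\<lambda>y::ennreal. ennreal a * y + b)"
      using cont by (simp add: continuous_on_eq_continuous_within continuous_at_imp_continuous_at_within)
  qed (auto intro!: monoI add_right_mono mult_left_mono)
  then show ?thesis by (simp add: image_comp)
qed

lemma esssup_bounded_real:
  fixes f :: "'a \<Rightarrow> real"
  assumes "prob_space M" and f_meas: "f \<in> borel_measurable M"
    and bound: "\<And>x. x \<in> space M \<Longrightarrow> \<bar>f x\<bar> \<le> B"
  obtains r where "esssup M (\<lambda>x. ereal (f x)) = ereal r" and "AE x in M. f x \<le> r"
proof -
  interpret prob_space M by fact
  let ?S = "esssup M (\<lambda>x. ereal (f x))"
  have ae_le: "AE x in M. ereal (f x) \<le> ?S" by (rule esssup_AE)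
  have upper: "?S \<le> ereal B"
    using f_meas bound by (intro esssup_I) (auto intro!: AE_I2 simp: abs_le_iff)
  have "AE x in M. ereal (- B) \<le> ?S"
    using ae_le AE_space
  proof eventually_elim
    case (elim x)
    then show ?case using bound[of x] by (auto simp: abs_le_iff intro: order_trans[rotated])
  qed
  then have lower: "ereal (- B) \<le> ?S" by simp
  have S_real: "?S = ereal (real_of_ereal ?S)" using upper lower by (cases ?S) auto
  show ?thesis
  proof (rule that)
    show "AE x in M. f x \<le> real_of_ereal ?S"
      using ae_le by eventually_elim (subst (asm) S_real, simp)
  qed (fact S_real)
qed

lemma ess_bounds_osc:
  fixes g :: "'a \<Rightarrow> real"
  assumes "prob_space M" and g_meas: "g \<in> borel_measurable M"
    and bound: "\<And>x. x \<in> space M \<Longrightarrow> \<bar>g x\<bar> \<le> B"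
  obtains lo hi where "AE x in M. lo \<le> g x \<and> g x \<le> hi"
    and "real_of_ereal (osc M g) = hi - lo"
proof -
  obtain hi where hi: "esssup M (\<lambda>x. ereal (g x)) = ereal hi" "AE x in M. g x \<le> hi"
    using esssup_bounded_real[OF assms] .
  obtain r where r: "esssup M (\<lambda>x. ereal (- g x)) = ereal r" "AE x in M. - g x \<le> r"
    using esssup_bounded_real[OF \<open>prob_space M\<close>, of "\<lambda>x. - g x" B] g_meas bound by auto
  show ?thesis
  proof (rule that[of "- r" hi])
    show "AE x in M. - r \<le> g x \<and> g x \<le> hi"
      using hi(2) r(2) by eventually_elim auto
    show "real_of_ereal (osc M g) = hi - - r"
      unfolding osc_def hi(1) r(1) by simp
  qed
qed

text \<open>Every level u < G(s) has \<mu>(w \<le> u) \<le> s, and {w < G(s)} is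
  the increasing union of such sublevel sets.\<close>
lemma emeasure_below_quantile:
  fixes w :: "'a \<Rightarrow> real"
  assumes "prob_space M" and w_meas: "w \<in> borel_measurable M"
    and w_nonneg: "\<And>x. x \<in> space M \<Longrightarrow> w x \<ge> 0" and "0 \<le> s"
  shows "emeasure M {x \<in> space M. w x < quantile_G M w s} \<le> ennreal s"
proof -
  interpret prob_space M by fact
  define G where "G = quantile_G M w s"
  define S where "S = {u. measure M {x \<in> space M. w x \<le> u} > s}"
  have G_eq: "G = Inf S" unfolding G_def quantile_G_def S_def ..
  have bdd: "bdd_below S"
  proof (rule bdd_belowI)
    fix u assume "u \<in> S"
    show "0 \<le> u"
    proof (rule ccontr)
      assume "\<not> 0 \<le> u"
      then have "{x \<in> space M. w x \<le> u} = {}" using w_nonneg by force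
      then have "measure M {x \<in> space M. w x \<le> u} = 0" by (simp only: measure_empty)
      then show False using \<open>u \<in> S\<close> \<open>0 \<le> s\<close> unfolding S_def by simp
    qed
  qed
  have below: "measure M {x \<in> space M. w x \<le> u} \<le> s" if "u < G" for u
  proof (rule ccontr)
    assume "\<not> ?thesis"
    then have "G \<le> u" unfolding G_eq S_def by (intro cInf_lower[OF _ bdd[unfolded S_def]]) simp
    then show False using that by simp
  qed
  define A where "A = (\<lambda>n::nat. {x \<in> space M. w x \<le> G - 1 / Suc n})"
  have A_sets: "range A \<subseteq> sets M" unfolding A_def using w_meas by auto
  have A_inc: "incseq A"
  proof (rule monoI)
    fix n m :: nat assume "n \<le> m"
    then have "1 / real (Suc m) \<le> 1 / real (Suc n)" by (intro divide_left_mono) auto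
    then show "A n \<le> A m" unfolding A_def by auto
  qed
  have union: "{x \<in> space M. w x < G} = (\<Union>n. A n)"
  proof (intro equalityI subsetI)
    fix x assume x: "x \<in> {x \<in> space M. w x < G}"
    then have "0 < G - w x" by simp
    then obtain n where "1 / real (Suc n) < G - w x" by (rule nat_approx_posE)
    then have "x \<in> A n" using x unfolding A_def by auto
    then show "x \<in> (\<Union>n. A n)" by blast
  next
    fix x assume "x \<in> (\<Union>n. A n)"
    then obtain n where x: "x \<in> space M" "w x \<le> G - 1 / real (Suc n)"
      unfolding A_def by blast
    have "0 < 1 / real (Suc n)" by simp
    with x have "w x < G" by linarith
    with x show "x \<in> {x \<in> space M. w x < G}" by simp
  qed
  have "emeasure M {x \<in> space M. w x < G} = (SUP n. emeasure M (A n))"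
    unfolding union using SUP_emeasure_incseq[OF A_sets A_inc] by simp
  also have "\<dots> \<le> ennreal s"
  proof (rule SUP_least)
    fix n
    have "G - 1 / real (Suc n) < G" by simp
    then show "emeasure M (A n) \<le> ennreal s"
      unfolding A_def emeasure_eq_measure by (intro ennreal_leI below)
  qed
  finally show ?thesis unfolding G_def .
qed

lemma nn_integral_split_by_weight:
  fixes h w :: "'a \<Rightarrow> real"
  assumes h_meas: "h \<in> borel_measurable M" and w_meas: "w \<in> borel_measurable M"
    and G_pos: "G > 0"
    and h_bound: "AE x in M. 0 \<le> h x \<and> h x \<le> K"
  shows "(\<integral>\<^sup>+ x. ennreal (h x) \<partial>M)
      \<le> ennreal (1 / G) * (\<integral>\<^sup>+ x. ennreal (h x * w x) \<partial>M)
        + ennreal K * emeasure M {x \<in> space M. w x < G}"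
proof -
  define W where "W = {x \<in> space M. w x < G}"
  have W_sets: "W \<in> sets M" unfolding W_def using w_meas by auto
  have "(\<integral>\<^sup>+ x. ennreal (h x) \<partial>M)
      \<le> (\<integral>\<^sup>+ x. ennreal (1 / G) * ennreal (h x * w x) + ennreal K * indicator W x \<partial>M)"
  proof (rule nn_integral_mono_AE)
    show "AE x in M. ennreal (h x) \<le> ennreal (1 / G) * ennreal (h x * w x) + ennreal K * indicator W x"
      using h_bound AE_space
    proof eventually_elim
      case (elim x)
      show ?case
      proof (cases "x \<in> W")
        case True
        then have "ennreal (h x) \<le> ennreal K * indicator W x"
          using elim by (simp add: ennreal_leI)
        then show ?thesis by (simp add: add_increasing)
      next
        case False
        with elim have "G \<le> w x" unfolding W_def by auto
        then have "G * h x \<le> w x * h x" using elim by (intro mult_right_mono) auto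
        then have "h x \<le> (1 / G) * (h x * w x)"
          using G_pos by (simp add: field_simps mult.commute)
        moreover have "0 \<le> h x * w x" using G_pos \<open>G \<le> w x\<close> elim by simp
        ultimately have "ennreal (h x) \<le> ennreal (1 / G) * ennreal (h x * w x)"
          using G_pos by (simp add: ennreal_mult[symmetric] ennreal_leI)
        then show ?thesis by (simp add: add_increasing2)
      qed
    qed
  qed
  also have "\<dots> = ennreal (1 / G) * (\<integral>\<^sup>+ x. ennreal (h x * w x) \<partial>M) + ennreal K * emeasure M W"
    using h_meas w_meas W_sets
    by (subst nn_integral_add) (auto simp: nn_integral_cmult nn_integral_cmult_indicator)
  finally show ?thesis unfolding W_def .
qed

lemma weighted_deviation_clamp:
  fixes g w :: "'a \<Rightarrow> real"
  assumes w_nonneg: "\<And>x. x \<in> space M \<Longrightarrow> w x \<ge> 0"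
    and range: "AE x in M. lo \<le> g x \<and> g x \<le> hi" and "lo \<le> hi"
  shows "(\<integral>\<^sup>+ x. ennreal (\<bar>g x - max lo (min hi c)\<bar> * w x) \<partial>M)
      \<le> (\<integral>\<^sup>+ x. ennreal (\<bar>g x - c\<bar> * w x) \<partial>M)"
proof (rule nn_integral_mono_AE)
  show "AE x in M. ennreal (\<bar>g x - max lo (min hi c)\<bar> * w x) \<le> ennreal (\<bar>g x - c\<bar> * w x)"
    using range AE_space
  proof eventually_elim
    case (elim x)
    then have "\<bar>g x - max lo (min hi c)\<bar> \<le> \<bar>g x - c\<bar>" using \<open>lo \<le> hi\<close> by auto
    then show ?case using w_nonneg[OF \<open>x \<in> space M\<close>]
      by (intro ennreal_leI mult_right_mono) auto
  qed
qed

lemma deviation_transfer: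
  fixes g w :: "'a \<Rightarrow> real"
  assumes "prob_space M" and g_meas: "g \<in> borel_measurable M"
    and range: "AE x in M. lo \<le> g x \<and> g x \<le> hi"
    and w_meas: "w \<in> borel_measurable M" and w_nonneg: "\<And>x. x \<in> space M \<Longrightarrow> w x \<ge> 0"
    and "0 \<le> s" and G_pos: "quantile_G M w s > 0"
  shows "(INF c::real. \<integral>\<^sup>+ x. ennreal \<bar>g x - c\<bar> \<partial>M)
      \<le> ennreal (1 / quantile_G M w s) * (INF c::real. \<integral>\<^sup>+ x. ennreal (\<bar>g x - c\<bar> * w x) \<partial>M)
        + ennreal (hi - lo) * ennreal s"
proof -
  interpret prob_space M by fact
  have "AE x in M. lo \<le> hi" using range by eventually_elim auto
  then have lo_hi: "lo \<le> hi" by simp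
  define G where "G = quantile_G M w s"
  define I where "I = (\<lambda>c. \<integral>\<^sup>+ x. ennreal (\<bar>g x - c\<bar> * w x) \<partial>M)"
  have small: "emeasure M {x \<in> space M. w x < G} \<le> ennreal s"
    unfolding G_def by (rule emeasure_below_quantile) (use assms in auto)
  have "(INF c::real. \<integral>\<^sup>+ x. ennreal \<bar>g x - c\<bar> \<partial>M)
      \<le> ennreal (1 / G) * I c + ennreal (hi - lo) * ennreal s" for c
  proof -
    let ?c = "max lo (min hi c)"
    have "AE x in M. 0 \<le> \<bar>g x - ?c\<bar> \<and> \<bar>g x - ?c\<bar> \<le> hi - lo"
      using range by eventually_elim auto
    then have "(\<integral>\<^sup>+ x. ennreal \<bar>g x - ?c\<bar> \<partial>M)
        \<le> ennreal (1 / G) * I ?c + ennreal (hi - lo) * emeasure M {x \<in> space M. w x < G}"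
      unfolding I_def using g_meas w_meas G_pos G_def
      by (intro nn_integral_split_by_weight) auto
    also have "\<dots> \<le> ennreal (1 / G) * I c + ennreal (hi - lo) * ennreal s"
      using weighted_deviation_clamp[OF w_nonneg range lo_hi] small unfolding I_def
      by (intro add_mono mult_left_mono) auto
    finally show ?thesis by (intro INF_lower2[OF UNIV_I])
  qed
  then have "(INF c::real. \<integral>\<^sup>+ x. ennreal \<bar>g x - c\<bar> \<partial>M)
      \<le> (INF c. ennreal (1 / G) * I c + ennreal (hi - lo) * ennreal s)"
    by (rule INF_greatest)
  then show ?thesis unfolding INF_ennreal_affine I_def G_def .
qed

theorem mainTheorem11:
  fixes M :: "('a::polish_space) measure"
    and L :: "('a \<Rightarrow> real) \<Rightarrow> 'a \<Rightarrow> real"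
    and A :: "('a \<Rightarrow> real) set"
    and w :: "'a \<Rightarrow> real" and C s :: real and g :: "'a \<Rightarrow> real"
  assumes frame: "diffusion_framework M L A"
    and w_meas: "w \<in> borel_measurable M"
    and w_nonneg: "\<And>x. x \<in> space M \<Longrightarrow> w x \<ge> 0"
    and w_int: "integrable M w"
    and C_pos: "C > 0"
    and hyp: "\<And>f. f \<in> A \<Longrightarrow>
        (INF c::real. \<integral>\<^sup>+ x. ennreal (\<bar>f x - c\<bar> * w x) \<partial>M)
          \<le> ennreal C * (\<integral>\<^sup>+ x. ennreal (sqrt (carre_du_champ L f x)) \<partial>M)"
    and s: "0 < s" "s < 1"
    and G_pos: "quantile_G M w s > 0"
    and g: "g \<in> A"
  shows "(INF c::real. \<integral>\<^sup>+ x. ennreal \<bar>g x - c\<bar> \<partial>M)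
          \<le> ennreal (C / quantile_G M w s) * (\<integral>\<^sup>+ x. ennreal (sqrt (carre_du_champ L g x)) \<partial>M)
             + ennreal (s * real_of_ereal (osc M g))"
proof -
  have prob: "prob_space M" and g_meas: "g \<in> borel_measurable M"
    and "\<exists>B. \<forall>x\<in>space M. \<bar>g x\<bar> \<le> B"
    using frame g unfolding diffusion_framework_def by auto
  then obtain B where "\<And>x. x \<in> space M \<Longrightarrow> \<bar>g x\<bar> \<le> B" by blast
  then obtain lo hi where range: "AE x in M. lo \<le> g x \<and> g x \<le> hi"
      and osc_eq: "real_of_ereal (osc M g) = hi - lo"
    using ess_bounds_osc[OF prob g_meas] by blast
  interpret prob_space M by (fact prob)
  have "AE x in M. lo \<le> hi" using range by eventually_elim auto
  then have "hi - lo \<ge> 0" by simp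
  let ?G = "quantile_G M w s" and ?E = "\<integral>\<^sup>+ x. ennreal (sqrt (carre_du_champ L g x)) \<partial>M"
  have "(INF c::real. \<integral>\<^sup>+ x. ennreal \<bar>g x - c\<bar> \<partial>M)
      \<le> ennreal (1 / ?G) * (INF c::real. \<integral>\<^sup>+ x. ennreal (\<bar>g x - c\<bar> * w x) \<partial>M)
        + ennreal (hi - lo) * ennreal s"
    using deviation_transfer[OF prob g_meas range w_meas w_nonneg] s G_pos by simp
  also have "\<dots> \<le> ennreal (1 / ?G) * (ennreal C * ?E) + ennreal (hi - lo) * ennreal s"
    using hyp[OF g] by (intro add_right_mono mult_left_mono) auto
  also have "\<dots> = ennreal (C / ?G) * ?E + ennreal (s * (hi - lo))"
    using G_pos C_pos s \<open>hi - lo \<ge> 0\<close>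
    by (simp add: mult.assoc[symmetric] ennreal_mult[symmetric] mult.commute)
  finally show ?thesis unfolding osc_eq .
qed

end
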